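(* Fix $a\in(0,1)$. For $b\in(0,\sqrt{\tfrac2a-2a})$ set $H=\frac12b^2-\frac1a-a$ and $c=1-ab^2$ (the energy and constant $c$ of the planar Stark solution with $(x(0),y(0))=(a,0)$, $(\dot x(0),\dot y(0))=(0,b)$), and define $$T_\xi=4\int_0^{\xi_1}\frac{d\xi}{\sqrt{\xi^4+2H\xi^2+2(c+1)}},\quad \xi_1^2=-H-\sqrt{H^2-2(c+1)},$$ $$T_\eta=4\int_0^{\eta_1}\frac{d\eta}{\sqrt{-\eta^4+2H\eta^2-2(c-1)}},\quad \eta_1^2=H+\sqrt{H^2-2(c-1)}.$$ Then $T_\xi/T_\eta$ is a strictly increasing function of $b$ and $$\lim_{b\to0}\frac{T_\xi}{T_\eta}=\frac{\sqrt{1+a^2}\,K(a^2)}{K(0)},\qquad \lim_{b\to\sqrt{\frac2a-2a}}\frac{T_\xi}{T_\eta}=+\infty .$$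
   Context: $K(m)=\int_0^1\frac{dt}{\sqrt{(1-t^2)(1-mt^2)}}$ is the complete elliptic integral of the first kind. $T_\xi$ and $T_\eta$ are the periods, in the regularized time $\tau$ (with $dt=(\xi^2+\eta^2)d\tau$), of the parabolic coordinates $\xi^2=r+x$, $\eta^2=r-x$ of that solution. *)

theory Defs
  imports "HOL-Analysis.Analysis"
begin

text \<open>Complete elliptic integral of the first kind (parameter convention m = k^2),
  as an (improper) Henstock-Kurzweil integral over [0,1].\<close>
definition ellK :: "real \<Rightarrow> real" where
  "ellK m = integral {0..1} (\<lambda>t. 1 / sqrt ((1 - t\<^sup>2) * (1 - m * t\<^sup>2)))"

definition starkH :: "real \<Rightarrow> real \<Rightarrow> real" where
  "starkH a b = b\<^sup>2 / 2 - 1 / a - a"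

definition starkc :: "real \<Rightarrow> real \<Rightarrow> real" where
  "starkc a b = 1 - a * b\<^sup>2"

definition xi1 :: "real \<Rightarrow> real \<Rightarrow> real" where
  "xi1 a b = sqrt (- starkH a b - sqrt ((starkH a b)\<^sup>2 - 2 * (starkc a b + 1)))"

definition eta1 :: "real \<Rightarrow> real \<Rightarrow> real" where
  "eta1 a b = sqrt (starkH a b + sqrt ((starkH a b)\<^sup>2 - 2 * (starkc a b - 1)))"

definition Txi :: "real \<Rightarrow> real \<Rightarrow> real" where
  "Txi a b = 4 * integral {0..xi1 a b}
     (\<lambda>x. 1 / sqrt (x^4 + 2 * starkH a b * x\<^sup>2 + 2 * (starkc a b + 1)))"

definition Teta :: "real \<Rightarrow> real \<Rightarrow> real" where
  "Teta a b = 4 * integral {0..eta1 a b}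
     (\<lambda>y. 1 / sqrt (- (y^4) + 2 * starkH a b * y\<^sup>2 - 2 * (starkc a b - 1)))"

end

theory Submission
  imports Defs
begin

text \<open>
  Rescaling the variable of integration to the unit interval turns both quarter periods into
  integrals ellI A B = int_0^1 ds / sqrt ((1 - s^2) (A + B s^2)) with A > 0 and A + B > 0.
  Because A + B s^2 is affine in s^2, comparing it with r (C + D s^2) at s^2 = 0 and s^2 = 1
  gives ellI A B <= sqrt r * ellI C D; this single inequality yields positivity, continuity in
  (A, B) and the monotonicity.

  In the variable beta = 2/a - b^2 one gets T_xi = 4 ellI beta (-2a) and
  T_eta = 4 ellI (q + p) (q - p) with p = beta/2 + a and q = sqrt ((beta/2 - a)^2 + 4).
  As beta decreases, sqrt beta * T_xi does not decrease, while sqrt beta * T_eta strictly decreases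
  because q/beta and (q + p)/beta are strictly decreasing; hence T_xi/T_eta increases with b.
  At b = 0 both integrals are complete elliptic integrals by homogeneity of ellI.
  As beta tends to 2a, the integrand of T_xi acquires a non-integrable singularity 1/(1 - s)
  at s = 1, so T_xi grows like -ln (beta - 2a), whereas T_eta stays bounded.
\<close>

definition ellI :: "real \<Rightarrow> real \<Rightarrow> real" where
  "ellI A B = integral {0..1} (\<lambda>s. 1 / sqrt ((1 - s\<^sup>2) * (A + B * s\<^sup>2)))"

lemma ellK_eq_ellI: "ellK m = ellI 1 (- m)"
  by (simp add: ellK_def ellI_def)

lemma ellI_scale: "ellI (c * A) (c * B) = ellI A B / sqrt c"
proof -
  have pointwise: "1 / sqrt ((1 - s\<^sup>2) * (c * A + c * B * s\<^sup>2))
      = 1 / sqrt ((1 - s\<^sup>2) * (A + B * s\<^sup>2)) / sqrt c" for s :: real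
  proof -
    have "(1 - s\<^sup>2) * (c * A + c * B * s\<^sup>2) = c * ((1 - s\<^sup>2) * (A + B * s\<^sup>2))"
      by algebra
    moreover have "1 / sqrt (c * X) = 1 / sqrt X / sqrt c" for X
      by (simp add: real_sqrt_mult)
    ultimately show ?thesis
      by metis
  qed
  show ?thesis
    unfolding ellI_def pointwise by (rule Henstock_Kurzweil_Integration.integral_divide)
qed

lemma has_integral_inverse_sqrt_one_minus_square:
  "((\<lambda>s. 1 / sqrt (1 - s\<^sup>2)) has_integral pi / 2) {0..1}"
proof -
  have "((\<lambda>s. inverse (sqrt (1 - s\<^sup>2))) has_integral arcsin 1 - arcsin 0) {0..1}"
  proof (rule fundamental_theorem_of_calculus_interior)
    show "continuous_on {0..1} arcsin"
      by (rule continuous_on_subset[OF continuous_on_arcsin']) auto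
    fix x :: real assume "x \<in> {0<..<1}"
    then show "(arcsin has_vector_derivative inverse (sqrt (1 - x\<^sup>2))) (at x)"
      by (simp add: DERIV_arcsin flip: has_real_derivative_iff_has_vector_derivative)
  qed simp
  then show ?thesis
    by (simp add: inverse_eq_divide)
qed

lemma ellI_1_0: "ellI 1 0 = pi / 2"
  using has_integral_inverse_sqrt_one_minus_square by (simp add: ellI_def integral_unique)

lemma ellK_0: "ellK 0 = pi / 2"
  by (simp add: ellK_eq_ellI ellI_1_0)

lemma min_le_affine:
  fixes x A B :: real
  assumes "0 \<le> x" "x \<le> 1"
  shows "min A (A + B) \<le> A + B * x"
proof -
  have "A + B * x = (1 - x) * A + x * (A + B)"
    by algebra
  also have "\<dots> \<ge> (1 - x) * min A (A + B) + x * min A (A + B)"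
    using assms by (intro add_mono mult_left_mono) auto
  finally show ?thesis
    by (simp add: algebra_simps)
qed

lemma affine_le_affine:
  fixes x A B C D r :: real
  assumes "0 \<le> x" "x \<le> 1" "C \<le> r * A" "C + D \<le> r * (A + B)"
  shows "C + D * x \<le> r * (A + B * x)"
proof -
  have "C + D * x = (1 - x) * C + x * (C + D)"
    by algebra
  also have "\<dots> \<le> (1 - x) * (r * A) + x * (r * (A + B))"
    using assms by (intro add_mono mult_left_mono) auto
  also have "\<dots> = r * (A + B * x)"
    by algebra
  finally show ?thesis .
qed

lemma ellI_integrable:
  assumes "0 < A" "0 < A + B"
  shows "(\<lambda>s. 1 / sqrt ((1 - s\<^sup>2) * (A + B * s\<^sup>2))) integrable_on {0..1}"
proof -
  define m where "m = min A (A + B)"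
  have m: "0 < m"
    using assms by (simp add: m_def)
  have bounds: "m \<le> A + B * s\<^sup>2" "0 < 1 - s\<^sup>2" if "s \<in> {0<..<1}" for s :: real
    using that min_le_affine[of "s\<^sup>2" A B] by (auto simp: m_def abs_square_less_1 abs_square_le_1)
  have "(\<lambda>s. 1 / sqrt ((1 - s\<^sup>2) * (A + B * s\<^sup>2))) integrable_on {0<..<1}"
  proof (rule measurable_bounded_by_integrable_imp_integrable)
    show "(\<lambda>s. 1 / sqrt ((1 - s\<^sup>2) * (A + B * s\<^sup>2))) \<in> borel_measurable (lebesgue_on {0<..<1})"
    proof (rule continuous_imp_measurable_on_sets_lebesgue)
      show "continuous_on {0<..<1} (\<lambda>s. 1 / sqrt ((1 - s\<^sup>2) * (A + B * s\<^sup>2)))"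
      proof (intro continuous_intros ballI)
        fix s :: real assume "s \<in> {0<..<1}"
        note s = bounds[OF this]
        have "0 < (1 - s\<^sup>2) * (A + B * s\<^sup>2)"
          using s m by (intro mult_pos_pos) linarith+
        then show "sqrt ((1 - s\<^sup>2) * (A + B * s\<^sup>2)) \<noteq> 0"
          by (metis less_irrefl real_sqrt_gt_zero)
      qed
    qed auto
    show "(\<lambda>s. 1 / sqrt m * (1 / sqrt (1 - s\<^sup>2))) integrable_on {0<..<1}"
    proof (rule integrable_on_mult_right)
      show "(\<lambda>s. 1 / sqrt (1 - s\<^sup>2)) integrable_on {0<..<1}"
        using has_integral_inverse_sqrt_one_minus_square integrable_on_Icc_iff_Ioo by blast
    qed
    fix s :: real assume "s \<in> {0<..<1}"
    note s = bounds[OF this]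
    have "sqrt m * sqrt (1 - s\<^sup>2) \<le> sqrt ((1 - s\<^sup>2) * (A + B * s\<^sup>2))"
      unfolding real_sqrt_mult[symmetric] using s m by (intro real_sqrt_le_mono) (simp add: mult.commute)
    moreover have "0 < sqrt m * sqrt (1 - s\<^sup>2)"
      using s m by simp
    ultimately have "1 / sqrt ((1 - s\<^sup>2) * (A + B * s\<^sup>2)) \<le> 1 / (sqrt m * sqrt (1 - s\<^sup>2))"
      by (intro frac_le) simp_all
    then show "norm (1 / sqrt ((1 - s\<^sup>2) * (A + B * s\<^sup>2))) \<le> 1 / sqrt m * (1 / sqrt (1 - s\<^sup>2))"
      using s m by simp
  qed auto
  then show ?thesis
    by (simp add: integrable_on_Icc_iff_Ioo)
qed

lemma inverse_sqrt_le_sqrt_div: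
  fixes P Q r :: real
  assumes "0 < r" "0 < Q" "Q \<le> r * P"
  shows "1 / sqrt P \<le> sqrt r / sqrt Q"
proof -
  have "1 / sqrt P = sqrt r / sqrt (r * P)"
    using assms(1) by (simp add: real_sqrt_mult)
  also have "\<dots> \<le> sqrt r / sqrt Q"
    using assms by (intro divide_left_mono) auto
  finally show ?thesis .
qed

lemma ellI_le_sqrt_mult:
  assumes "0 < C" "0 < C + D" "0 < r" "C \<le> r * A" "C + D \<le> r * (A + B)"
  shows "ellI A B \<le> sqrt r * ellI C D"
proof -
  have "0 < r * A" "0 < r * (A + B)"
    using assms by linarith+
  then have "0 < A" "0 < A + B"
    using \<open>0 < r\<close> by (simp_all add: zero_less_mult_iff)
  have pointwise: "1 / sqrt ((1 - s\<^sup>2) * (A + B * s\<^sup>2)) \<le> sqrt r * (1 / sqrt ((1 - s\<^sup>2) * (C + D * s\<^sup>2)))"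
    if "s \<in> {0..1}" for s :: real
  proof (cases "s\<^sup>2 = 1")
    case False
    have s: "0 \<le> s\<^sup>2" "s\<^sup>2 \<le> 1"
      using that by (auto simp: abs_square_le_1)
    then have "0 < 1 - s\<^sup>2"
      using False by simp
    have "0 < C + D * s\<^sup>2" "C + D * s\<^sup>2 \<le> r * (A + B * s\<^sup>2)"
      using min_le_affine[OF s, of C D] affine_le_affine[OF s assms(4,5)] assms(1,2) by auto
    then have "(1 - s\<^sup>2) * (C + D * s\<^sup>2) \<le> r * ((1 - s\<^sup>2) * (A + B * s\<^sup>2))"
      using \<open>0 < 1 - s\<^sup>2\<close> mult_left_mono[of "C + D * s\<^sup>2" "r * (A + B * s\<^sup>2)" "1 - s\<^sup>2"]
      by (simp add: mult.left_commute)
    with \<open>0 < r\<close> \<open>0 < 1 - s\<^sup>2\<close> \<open>0 < C + D * s\<^sup>2\<close> show ?thesis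
      using inverse_sqrt_le_sqrt_div by simp
  qed simp
  show ?thesis
    unfolding ellI_def
    using integral_le[OF ellI_integrable[OF \<open>0 < A\<close> \<open>0 < A + B\<close>]
        integrable_on_mult_right[OF ellI_integrable[OF assms(1,2)]] pointwise]
    by (simp only: Henstock_Kurzweil_Integration.integral_mult_right)
qed

lemma ellI_le_sqrt_max_ratio:
  assumes "0 < A" "0 < A + B" "0 < C" "0 < C + D"
  shows "ellI A B \<le> sqrt (max (C / A) ((C + D) / (A + B))) * ellI C D"
proof (rule ellI_le_sqrt_mult)
  show "0 < max (C / A) ((C + D) / (A + B))"
    using assms by (simp add: less_max_iff_disj)
  have "C / A \<le> max (C / A) ((C + D) / (A + B))"
    by simp
  then show "C \<le> max (C / A) ((C + D) / (A + B)) * A"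
    using pos_divide_le_eq[OF assms(1)] by blast
  have "(C + D) / (A + B) \<le> max (C / A) ((C + D) / (A + B))"
    by simp
  then show "C + D \<le> max (C / A) ((C + D) / (A + B)) * (A + B)"
    using pos_divide_le_eq[OF assms(2)] by blast
qed (use assms in auto)

lemma ellI_pos:
  assumes "0 < A" "0 < A + B"
  shows "0 < ellI A B"
proof -
  have "pi / 2 \<le> sqrt (max A (A + B)) * ellI A B"
    using ellI_le_sqrt_max_ratio[of 1 0 A B] assms by (simp add: ellI_1_0)
  then have "0 < sqrt (max A (A + B)) * ellI A B"
    using pi_gt_zero by linarith
  then show ?thesis
    using assms by (auto simp: zero_less_mult_iff)
qed

lemma ellI_tendsto:
  assumes A: "(A \<longlongrightarrow> A0) F" and B: "(B \<longlongrightarrow> B0) F" and pos: "0 < A0" "0 < A0 + B0"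
  shows "((\<lambda>x. ellI (A x) (B x)) \<longlongrightarrow> ellI A0 B0) F"
proof -
  have AB: "((\<lambda>x. A x + B x) \<longlongrightarrow> A0 + B0) F"
    using A B by (rule tendsto_add)
  have eventually_pos: "\<forall>\<^sub>F x in F. 0 < A x \<and> 0 < A x + B x"
    using order_tendstoD(1)[OF A pos(1)] order_tendstoD(1)[OF AB pos(2)] by eventually_elim auto
  define r where "r x = max (A0 / A x) ((A0 + B0) / (A x + B x))" for x
  define r' where "r' x = max (A x / A0) ((A x + B x) / (A0 + B0))" for x
  have "(r \<longlongrightarrow> max (A0 / A0) ((A0 + B0) / (A0 + B0))) F"
    unfolding r_def using pos by (intro tendsto_intros A AB) auto
  then have r: "(r \<longlongrightarrow> 1) F"
    using pos by simp
  have "(r' \<longlongrightarrow> max (A0 / A0) ((A0 + B0) / (A0 + B0))) F"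
    unfolding r'_def using pos by (intro tendsto_intros A AB) auto
  then have r': "(r' \<longlongrightarrow> 1) F"
    using pos by simp
  show ?thesis
  proof (rule tendsto_sandwich)
    show "\<forall>\<^sub>F x in F. ellI A0 B0 / sqrt (r' x) \<le> ellI (A x) (B x)"
      using eventually_pos
    proof eventually_elim
      case (elim x)
      then have "0 < r' x"
        using pos by (simp add: r'_def less_max_iff_disj)
      moreover have "ellI A0 B0 \<le> sqrt (r' x) * ellI (A x) (B x)"
        unfolding r'_def using elim pos by (intro ellI_le_sqrt_max_ratio) auto
      ultimately show ?case
        by (simp add: divide_le_eq mult.commute)
    qed
    show "\<forall>\<^sub>F x in F. ellI (A x) (B x) \<le> sqrt (r x) * ellI A0 B0"
      using eventually_pos
    proof eventually_elim
      case (elim x)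
      then show ?case
        unfolding r_def using pos by (intro ellI_le_sqrt_max_ratio) auto
    qed
    show "((\<lambda>x. ellI A0 B0 / sqrt (r' x)) \<longlongrightarrow> ellI A0 B0) F"
      using tendsto_divide[OF tendsto_const tendsto_real_sqrt[OF r'], of "ellI A0 B0"] by simp
    show "((\<lambda>x. sqrt (r x) * ellI A0 B0) \<longlongrightarrow> ellI A0 B0) F"
      using tendsto_mult[OF tendsto_real_sqrt[OF r] tendsto_const, of "ellI A0 B0"] by simp
  qed
qed

lemma sqrt_mult_ellI_antimono:
  assumes "0 < A' + B" "A' \<le> A" "B \<le> 0"
  shows "sqrt A * ellI A B \<le> sqrt A' * ellI A' B"
proof -
  have "0 < A'" "0 < A"
    using assms by linarith+
  have "A' + B \<le> A' / A * (A + B)"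
  proof -
    have "A' / A \<le> 1"
      using assms \<open>0 < A\<close> by simp
    then have "B \<le> A' / A * B"
      using mult_right_mono_neg[OF _ assms(3)] by fastforce
    then show ?thesis
      using \<open>0 < A\<close> by (simp add: distrib_left)
  qed
  then have "ellI A B \<le> sqrt (A' / A) * ellI A' B"
    using assms \<open>0 < A'\<close> \<open>0 < A\<close> by (intro ellI_le_sqrt_mult) auto
  then have "sqrt A * ellI A B \<le> sqrt A * sqrt (A' / A) * ellI A' B"
    using \<open>0 < A\<close> by (simp add: mult.assoc)
  also have "sqrt A * sqrt (A' / A) = sqrt A'"
    using \<open>0 < A\<close> by (simp add: real_sqrt_mult[symmetric])
  finally show ?thesis .
qed

lemma has_integral_inverse_one_minus:
  fixes d :: real
  assumes "0 < d" "d \<le> 1"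
  shows "((\<lambda>s. 1 / (1 - s)) has_integral - ln d) {0..1 - d}"
proof -
  have "((\<lambda>s. 1 / (1 - s)) has_integral - ln (1 - (1 - d)) - - ln (1 - 0)) {0..1 - d}"
  proof (rule fundamental_theorem_of_calculus)
    fix s :: real assume "s \<in> {0..1 - d}"
    then have "s < 1"
      using assms by simp
    then have "((\<lambda>s. - ln (1 - s)) has_real_derivative 1 / (1 - s)) (at s)"
      by (auto intro!: derivative_eq_intros simp: field_simps)
    then show "((\<lambda>s. - ln (1 - s)) has_vector_derivative 1 / (1 - s)) (at s within {0..1 - d})"
      by (simp add: has_real_derivative_iff_has_vector_derivative has_vector_derivative_at_within)
  qed (use assms in simp)
  then show ?thesis
    by simp
qed

lemma inverse_one_minus_le_ellI_integrand:
  assumes c: "0 \<le> c" and d: "0 < d" and s: "0 \<le> s" "s \<le> 1 - d"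
  shows "1 / sqrt (2 * (1 + 2 * c)) * (1 / (1 - s)) \<le> 1 / sqrt ((1 - s\<^sup>2) * (c + d + - c * s\<^sup>2))"
proof -
  define t where "t = 1 - s"
  have t: "d \<le> t" "t \<le> 1"
    using s by (auto simp: t_def)
  have "1 - s\<^sup>2 = t * (2 - t)" "c + d + - c * s\<^sup>2 = d + c * (t * (2 - t))"
    by (simp_all add: t_def power2_eq_square algebra_simps)
  moreover have u: "0 < t * (2 - t)" "t * (2 - t) \<le> 2 * t"
    using t d by auto
  moreover have "0 < d + c * (t * (2 - t))"
    using u c d by (simp add: add_pos_nonneg)
  moreover have "c * (t * (2 - t)) \<le> c * (2 * t)"
    using u(2) by (rule mult_left_mono[OF _ c])
  then have "d + c * (t * (2 - t)) \<le> t * (1 + 2 * c)"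
    using t by (simp add: algebra_simps)
  ultimately have "0 < (1 - s\<^sup>2) * (c + d + - c * s\<^sup>2)"
    "(1 - s\<^sup>2) * (c + d + - c * s\<^sup>2) \<le> (2 * t) * (t * (1 + 2 * c))"
    by (auto intro!: mult_mono)
  moreover have "(2 * t) * (t * (1 + 2 * c)) = t\<^sup>2 * (2 * (1 + 2 * c))"
    by (simp add: power2_eq_square algebra_simps)
  then have "1 / sqrt (2 * (1 + 2 * c)) * (1 / (1 - s)) = 1 / sqrt ((2 * t) * (t * (1 + 2 * c)))"
    using t d by (simp add: t_def real_sqrt_mult)
  ultimately show ?thesis
    by (simp add: frac_le)
qed

lemma minus_ln_le_ellI:
  fixes d :: real
  assumes c: "0 \<le> c" and d: "0 < d" "d < 1"
  shows "- ln d / sqrt (2 * (1 + 2 * c)) \<le> ellI (c + d) (- c)"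
proof -
  let ?f = "\<lambda>s. 1 / sqrt ((1 - s\<^sup>2) * (c + d + - c * s\<^sup>2))"
  have int: "?f integrable_on {0..1}"
    using c d by (intro ellI_integrable) auto
  have int': "?f integrable_on {0..1 - d}"
    by (rule integrable_on_subinterval[OF int]) (use d in auto)
  have "- ln d / sqrt (2 * (1 + 2 * c)) \<le> integral {0..1 - d} ?f"
  proof (rule has_integral_le[OF _ integrable_integral[OF int']])
    show "((\<lambda>s. 1 / sqrt (2 * (1 + 2 * c)) * (1 / (1 - s))) has_integral - ln d / sqrt (2 * (1 + 2 * c))) {0..1 - d}"
      using has_integral_mult_right[OF has_integral_inverse_one_minus, of d "1 / sqrt (2 * (1 + 2 * c))"] d
      by simp
  qed (use c d inverse_one_minus_le_ellI_integrand in auto)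
  also have "\<dots> \<le> ellI (c + d) (- c)"
    unfolding ellI_def
  proof (rule integral_subset_le[OF _ int' int])
    show "\<forall>s\<in>{0..1}. 0 \<le> ?f s"
    proof
      fix s :: real assume "s \<in> {0..1}"
      then have "s\<^sup>2 \<le> 1"
        by (auto simp: abs_square_le_1)
      then have "0 \<le> (1 - s\<^sup>2) * (c + d + - c * s\<^sup>2)"
        using c d mult_left_le[of "s\<^sup>2" c] by (intro mult_nonneg_nonneg) auto
      then show "0 \<le> ?f s"
        by simp
    qed
  qed (use d in auto)
  finally show ?thesis .
qed

lemma integral_inverse_sqrt_quartic:
  assumes L: "0 < L" and pos: "0 < M" "0 < M + N * L\<^sup>2"
  shows "integral {0..L} (\<lambda>x. 1 / sqrt ((L\<^sup>2 - x\<^sup>2) * (M + N * x\<^sup>2))) = ellI M (N * L\<^sup>2)"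
proof -
  define g where "g = (\<lambda>s. 1 / sqrt ((1 - s\<^sup>2) * (M + N * L\<^sup>2 * s\<^sup>2)))"
  have "(g has_integral ellI M (N * L\<^sup>2)) (cbox 0 1)"
    using ellI_integrable[OF pos] by (simp add: g_def ellI_def integrable_integral)
  from has_integral_affinity'[OF this, of "1 / L" 0] L
  have "((\<lambda>x. g (x / L)) has_integral ellI M (N * L\<^sup>2) * L) {0..L}"
    by (simp add: divide_inverse mult.commute)
  from has_integral_mult_left[OF this, of "1 / L"] L
  have "((\<lambda>x. g (x / L) / L) has_integral ellI M (N * L\<^sup>2)) {0..L}"
    by simp
  moreover have "g (x / L) / L = 1 / sqrt ((L\<^sup>2 - x\<^sup>2) * (M + N * x\<^sup>2))" for x
  proof -
    have "(L\<^sup>2 - x\<^sup>2) * (M + N * x\<^sup>2) = L\<^sup>2 * ((1 - (x / L)\<^sup>2) * (M + N * L\<^sup>2 * (x / L)\<^sup>2))"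
      using L by (simp add: power_divide field_simps)
    then show ?thesis
      using L by (simp add: g_def real_sqrt_mult)
  qed
  ultimately show ?thesis
    by (simp add: integral_unique)
qed

text \<open>
  The quarter periods as functions of beta = 2/a - b^2 = xi_2^2. The xi-quartic factors as
  (xi^2 - 2a) (xi^2 - beta), so xi_1^2 = 2a; the eta-quartic factors as
  (q - p - eta^2) (q + p + eta^2) with p = beta/2 + a and q = eta_q a beta, so eta_1^2 = q - p.
\<close>

definition eta_q :: "real \<Rightarrow> real \<Rightarrow> real" where
  "eta_q a \<beta> = sqrt ((\<beta> / 2 - a)\<^sup>2 + 4)"

definition xi_quarter_period :: "real \<Rightarrow> real \<Rightarrow> real" where
  "xi_quarter_period a \<beta> = ellI \<beta> (- 2 * a)"

definition eta_quarter_period :: "real \<Rightarrow> real \<Rightarrow> real" where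
  "eta_quarter_period a \<beta> = ellI (eta_q a \<beta> + (\<beta> / 2 + a)) (eta_q a \<beta> - (\<beta> / 2 + a))"

definition period_ratio :: "real \<Rightarrow> real \<Rightarrow> real" where
  "period_ratio a \<beta> = xi_quarter_period a \<beta> / eta_quarter_period a \<beta>"

lemma eta_q_pos: "0 < eta_q a \<beta>"
proof -
  have "0 < (\<beta> / 2 - a)\<^sup>2 + 4"
    by (intro add_nonneg_pos) simp_all
  then show ?thesis
    by (simp add: eta_q_def)
qed

lemma eta_q_sq_diff:
  assumes "a \<noteq> 0"
  shows "(eta_q a \<beta>)\<^sup>2 - (\<beta> / 2 + a)\<^sup>2 = 2 * a * (2 / a - \<beta>)"
proof -
  have "(eta_q a \<beta>)\<^sup>2 = (\<beta> / 2 - a)\<^sup>2 + 4"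
    by (simp add: eta_q_def)
  moreover have "(\<beta> / 2 - a)\<^sup>2 + 4 - (\<beta> / 2 + a)\<^sup>2 = 4 - 2 * a * \<beta>"
    by (simp add: power2_eq_square algebra_simps)
  moreover have "2 * a * (2 / a - \<beta>) = 4 - 2 * a * \<beta>"
    using assms by (simp add: right_diff_distrib)
  ultimately show ?thesis
    by simp
qed

lemma eta_q_div_strict_antimono:
  assumes a: "0 < a" and \<beta>: "0 < \<beta>'" "\<beta>' < \<beta>" "\<beta> \<le> 2 / a"
  shows "eta_q a \<beta> * \<beta>' < eta_q a \<beta>' * \<beta>"
proof -
  have "a * \<beta> * \<beta>' \<le> 2 * \<beta>'"
    using a \<beta> by (simp add: le_divide_eq mult.commute)
  also have "\<dots> < 4 * (\<beta> + \<beta>')"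
    using \<beta> by simp
  also have "\<dots> \<le> (a\<^sup>2 + 4) * (\<beta> + \<beta>')"
    using \<beta> by (intro mult_right_mono) auto
  finally have key: "0 < (a\<^sup>2 + 4) * (\<beta> + \<beta>') - a * \<beta> * \<beta>'"
    by simp
  have sq: "(eta_q a x)\<^sup>2 = (x / 2 - a)\<^sup>2 + 4" for x
    by (simp add: eta_q_def)
  have "(eta_q a \<beta>' * \<beta>)\<^sup>2 - (eta_q a \<beta> * \<beta>')\<^sup>2
      = (\<beta> - \<beta>') * ((a\<^sup>2 + 4) * (\<beta> + \<beta>') - a * \<beta> * \<beta>')"
    unfolding power_mult_distrib sq by (simp add: power2_eq_square algebra_simps)
  also have "\<dots> > 0"
    using key \<beta> by simp
  finally have "(eta_q a \<beta> * \<beta>')\<^sup>2 < (eta_q a \<beta>' * \<beta>)\<^sup>2"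
    by simp
  moreover have "0 \<le> eta_q a \<beta>' * \<beta>"
    using \<beta> eta_q_pos[of a \<beta>'] by simp
  ultimately show ?thesis
    by (rule power2_less_imp_less)
qed

lemma Txi_eq_xi_quarter_period:
  assumes a: "0 < a" and b: "b\<^sup>2 < 2 / a - 2 * a"
  shows "Txi a b = 4 * xi_quarter_period a (2 / a - b\<^sup>2)"
proof -
  define \<beta> where "\<beta> = 2 / a - b\<^sup>2"
  define L where "L = sqrt (2 * a)"
  have "2 * a < \<beta>" "0 < L" "L\<^sup>2 = 2 * a"
    using a b by (auto simp: \<beta>_def L_def)
  have H: "starkH a b = - (\<beta> / 2 + a)" and c: "starkc a b + 1 = a * \<beta>"
    using a by (simp_all add: starkH_def starkc_def \<beta>_def field_simps)
  have "(starkH a b)\<^sup>2 - 2 * (starkc a b + 1) = (\<beta> / 2 - a)\<^sup>2"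
    unfolding H c by (simp add: power2_eq_square algebra_simps)
  then have "xi1 a b = L"
    using \<open>2 * a < \<beta>\<close> by (simp add: xi1_def H L_def)
  moreover have "x ^ 4 + 2 * starkH a b * x\<^sup>2 + 2 * (starkc a b + 1) = (L\<^sup>2 - x\<^sup>2) * (\<beta> + - 1 * x\<^sup>2)" for x
    unfolding H c \<open>L\<^sup>2 = 2 * a\<close> by (simp add: power2_eq_square power4_eq_xxxx algebra_simps)
  ultimately have "Txi a b = 4 * ellI \<beta> (- 1 * L\<^sup>2)"
    using integral_inverse_sqrt_quartic[of L \<beta> "- 1"] \<open>2 * a < \<beta>\<close> \<open>0 < L\<close> \<open>L\<^sup>2 = 2 * a\<close> a
    by (simp add: Txi_def)
  then show ?thesis
    by (simp add: xi_quarter_period_def \<beta>_def \<open>L\<^sup>2 = 2 * a\<close>)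
qed

lemma Teta_eq_eta_quarter_period:
  assumes a: "0 < a" and b: "b \<noteq> 0"
  shows "Teta a b = 4 * eta_quarter_period a (2 / a - b\<^sup>2)"
proof -
  define \<beta> where "\<beta> = 2 / a - b\<^sup>2"
  define p where "p = \<beta> / 2 + a"
  define q where "q = eta_q a \<beta>"
  define L where "L = sqrt (q - p)"
  have "q\<^sup>2 - p\<^sup>2 = 2 * a * b\<^sup>2"
    using eta_q_sq_diff[of a \<beta>] a by (simp add: p_def q_def \<beta>_def)
  moreover have "0 < 2 * a * b\<^sup>2"
    using a b by simp
  moreover have "0 \<le> q"
    using eta_q_pos[of a \<beta>] by (simp add: q_def)
  ultimately have "\<bar>p\<bar> < q"
    using power2_less_imp_less[of "\<bar>p\<bar>" q] by simp
  then have "0 < L" "L\<^sup>2 = q - p"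
    by (simp_all add: L_def)
  have H: "starkH a b = - p" and c: "starkc a b - 1 = - a * b\<^sup>2"
    using a by (simp_all add: starkH_def starkc_def p_def \<beta>_def field_simps)
  have "(starkH a b)\<^sup>2 - 2 * (starkc a b - 1) = q\<^sup>2"
    unfolding H c using \<open>q\<^sup>2 - p\<^sup>2 = 2 * a * b\<^sup>2\<close> by simp
  then have "eta1 a b = L"
    using \<open>\<bar>p\<bar> < q\<close> by (simp add: eta1_def H L_def)
  moreover have "- (y ^ 4) + 2 * starkH a b * y\<^sup>2 - 2 * (starkc a b - 1) = (L\<^sup>2 - y\<^sup>2) * ((q + p) + 1 * y\<^sup>2)" for y
  proof -
    have "(L\<^sup>2 - y\<^sup>2) * ((q + p) + 1 * y\<^sup>2) = q\<^sup>2 - p\<^sup>2 - 2 * p * y\<^sup>2 - y ^ 4"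
      unfolding \<open>L\<^sup>2 = q - p\<close> by (simp add: power2_eq_square power4_eq_xxxx algebra_simps)
    then show ?thesis
      unfolding H c \<open>q\<^sup>2 - p\<^sup>2 = 2 * a * b\<^sup>2\<close> by simp
  qed
  ultimately have "Teta a b = 4 * ellI (q + p) (1 * L\<^sup>2)"
    using integral_inverse_sqrt_quartic[of L "q + p" 1] \<open>\<bar>p\<bar> < q\<close> \<open>0 < L\<close> \<open>L\<^sup>2 = q - p\<close>
    by (simp add: Teta_def)
  then show ?thesis
    by (simp add: eta_quarter_period_def \<open>L\<^sup>2 = q - p\<close> p_def q_def \<beta>_def)
qed

lemma eta_quarter_period_pos:
  assumes "- 2 * a < \<beta>"
  shows "0 < eta_quarter_period a \<beta>"
  unfolding eta_quarter_period_def using assms eta_q_pos[of a \<beta>] by (intro ellI_pos) auto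

lemma eta_quarter_period_le:
  assumes a: "0 < a" and \<beta>: "2 * a < \<beta>" "\<beta> \<le> 2 / a"
  shows "eta_quarter_period a \<beta> \<le> ellI (2 * a) 0"
proof -
  define p q where "p = \<beta> / 2 + a" and "q = eta_q a \<beta>"
  have "2 * a < p"
    using \<beta> by (simp add: p_def)
  have "0 \<le> 2 * a * (2 / a - \<beta>)"
    using a \<beta> by simp
  then have "p\<^sup>2 \<le> q\<^sup>2"
    using eta_q_sq_diff[of a \<beta>] a unfolding p_def q_def by linarith
  then have "p \<le> q"
    by (rule power2_le_imp_le) (use eta_q_pos[of a \<beta>] in \<open>simp add: q_def less_imp_le\<close>)
  have "ellI (q + p) (q - p) \<le> sqrt 1 * ellI (2 * a) 0"
    by (rule ellI_le_sqrt_mult) (use a \<open>2 * a < p\<close> \<open>p \<le> q\<close> in auto)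
  then show ?thesis
    by (simp add: eta_quarter_period_def p_def q_def)
qed

lemma sqrt_mult_eta_quarter_period_strict_mono:
  assumes a: "0 < a" and \<beta>: "0 < \<beta>'" "\<beta>' < \<beta>" "\<beta> \<le> 2 / a"
  shows "sqrt \<beta>' * eta_quarter_period a \<beta>' < sqrt \<beta> * eta_quarter_period a \<beta>"
proof -
  define p p' q q' where "p = \<beta> / 2 + a" and "p' = \<beta>' / 2 + a"
    and "q = eta_q a \<beta>" and "q' = eta_q a \<beta>'"
  have pos: "0 < p" "0 < p'" "0 < q" "0 < q'"
    using a \<beta> eta_q_pos by (simp_all add: p_def p'_def q_def q'_def)
  have q: "q * \<beta>' < q' * \<beta>"
    unfolding q_def q'_def using eta_q_div_strict_antimono[OF a \<beta>] .
  have "(q + p) * \<beta>' = q * \<beta>' + \<beta> * \<beta>' / 2 + a * \<beta>'"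
    by (simp add: p_def algebra_simps)
  also have "\<dots> < q' * \<beta> + \<beta> * \<beta>' / 2 + a * \<beta>"
    using q mult_strict_left_mono[OF \<open>\<beta>' < \<beta>\<close> a] by linarith
  also have "\<dots> = (q' + p') * \<beta>"
    by (simp add: p'_def algebra_simps)
  finally have qp: "(q + p) * \<beta>' < (q' + p') * \<beta>" .
  define r where "r = max ((q + p) / (q' + p')) ((q + p + (q - p)) / (q' + p' + (q' - p')))"
  have "(q + p) / (q' + p') < \<beta> / \<beta>'" "q / q' < \<beta> / \<beta>'"
    using q qp pos \<beta> by (simp_all add: field_simps)
  then have "r < \<beta> / \<beta>'"
    by (simp add: r_def)
  then have "sqrt r < sqrt (\<beta> / \<beta>')"
    by simp
  have "eta_quarter_period a \<beta>' = ellI (q' + p') (q' - p')"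
    "eta_quarter_period a \<beta> = ellI (q + p) (q - p)"
    by (simp_all add: eta_quarter_period_def p_def p'_def q_def q'_def)
  then have "eta_quarter_period a \<beta>' \<le> sqrt r * eta_quarter_period a \<beta>"
    unfolding r_def using pos by (simp only:) (rule ellI_le_sqrt_max_ratio; simp)
  also have "\<dots> < sqrt (\<beta> / \<beta>') * eta_quarter_period a \<beta>"
    using \<open>sqrt r < sqrt (\<beta> / \<beta>')\<close> a \<beta> by (intro mult_strict_right_mono eta_quarter_period_pos) auto
  finally have "sqrt \<beta>' * eta_quarter_period a \<beta>' < sqrt \<beta>' * sqrt (\<beta> / \<beta>') * eta_quarter_period a \<beta>"
    using \<beta> by (simp add: mult.assoc)
  also have "sqrt \<beta>' * sqrt (\<beta> / \<beta>') = sqrt \<beta>"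
    using \<beta> by (simp add: real_sqrt_mult[symmetric])
  finally show ?thesis .
qed

lemma period_ratio_strict_antimono:
  assumes a: "0 < a"
  shows "strict_antimono_on {2 * a<..2 / a} (period_ratio a)"
proof (rule monotone_onI)
  fix \<beta>' \<beta> assume \<beta>': "\<beta>' \<in> {2 * a<..2 / a}" and \<beta>: "\<beta> \<in> {2 * a<..2 / a}" and "\<beta>' < \<beta>"
  define X X' Y Y' where "X = xi_quarter_period a \<beta>" and "X' = xi_quarter_period a \<beta>'"
    and "Y = eta_quarter_period a \<beta>" and "Y' = eta_quarter_period a \<beta>'"
  have pos: "0 < X" "0 < X'" "0 < Y" "0 < Y'" "0 < \<beta>'" "0 < \<beta>"
    using a \<beta> \<beta>' by (auto simp: X_def X'_def Y_def Y'_def xi_quarter_period_def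
        intro!: ellI_pos eta_quarter_period_pos)
  have "sqrt \<beta> * X \<le> sqrt \<beta>' * X'"
    unfolding X_def X'_def xi_quarter_period_def
    using \<beta>' \<open>\<beta>' < \<beta>\<close> a by (intro sqrt_mult_ellI_antimono) auto
  moreover have "sqrt \<beta>' * Y' < sqrt \<beta> * Y"
    unfolding Y_def Y'_def using a \<beta> \<open>\<beta>' < \<beta>\<close> pos
    by (intro sqrt_mult_eta_quarter_period_strict_mono) auto
  ultimately have "(sqrt \<beta> * X) * (sqrt \<beta>' * Y') < (sqrt \<beta>' * X') * (sqrt \<beta> * Y)"
    by (rule mult_le_less_imp_less) (use pos in auto)
  then have "X * Y' < X' * Y"
    using pos by (simp add: algebra_simps)
  then show "period_ratio a \<beta> < period_ratio a \<beta>'"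
    using pos by (simp add: period_ratio_def X_def X'_def Y_def Y'_def field_simps)
qed

lemma isCont_period_ratio:
  assumes "0 < a" "2 * a < \<beta>"
  shows "isCont (period_ratio a) \<beta>"
proof -
  have "isCont (eta_q a) \<beta>"
    unfolding eta_q_def by (intro continuous_intros) simp
  then have "isCont (eta_quarter_period a) \<beta>"
    unfolding continuous_at eta_quarter_period_def using assms eta_q_pos[of a \<beta>]
    by (intro ellI_tendsto tendsto_intros) auto
  moreover have "isCont (xi_quarter_period a) \<beta>"
    unfolding continuous_at xi_quarter_period_def using assms
    by (intro ellI_tendsto tendsto_ident_at tendsto_const) auto
  moreover have "eta_quarter_period a \<beta> \<noteq> 0"
    using assms eta_quarter_period_pos[of a \<beta>] by simp
  ultimately show ?thesis
    unfolding period_ratio_def[abs_def] by (intro isCont_divide)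
qed

lemma period_ratio_2_over_a:
  assumes a: "0 < a"
  shows "period_ratio a (2 / a) = sqrt (1 + a\<^sup>2) * ellK (a\<^sup>2) / ellK 0"
proof -
  have "xi_quarter_period a (2 / a) = ellI (2 / a * 1) (2 / a * - (a\<^sup>2))"
    using a by (simp add: xi_quarter_period_def power2_eq_square)
  then have xi: "xi_quarter_period a (2 / a) = ellK (a\<^sup>2) / sqrt (2 / a)"
    by (simp only: ellI_scale ellK_eq_ellI)
  have "(1 / a - a)\<^sup>2 + 4 = (1 / a + a)\<^sup>2"
    using a by (simp add: power2_eq_square field_simps)
  then have "eta_q a (2 / a) = 1 / a + a"
    using a by (simp add: eta_q_def)
  then have "eta_quarter_period a (2 / a) = ellI ((2 / a + 2 * a) * 1) ((2 / a + 2 * a) * - 0)"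
    by (simp add: eta_quarter_period_def)
  then have eta: "eta_quarter_period a (2 / a) = ellK 0 / sqrt (2 / a + 2 * a)"
    by (simp only: ellI_scale ellK_eq_ellI)
  have "sqrt (2 / a + 2 * a) / sqrt (2 / a) = sqrt (1 + a\<^sup>2)"
    using a by (simp add: real_sqrt_divide[symmetric] field_simps power2_eq_square)
  then show ?thesis
    unfolding period_ratio_def xi eta using a by (simp add: ellK_0 field_simps)
qed

lemma two_mult_less_two_div:
  fixes a :: real
  assumes "0 < a" "a < 1"
  shows "2 * a < 2 / a"
proof -
  have "a * a < 1 * 1"
    by (rule mult_strict_mono) (use assms in auto)
  then show ?thesis
    using assms by (simp add: field_simps)
qed

lemma filterlim_period_ratio_at_top:
  assumes a: "0 < a" "a < 1"
  shows "filterlim (period_ratio a) at_top (at_right (2 * a))"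
proof -
  define M where "M = ellI (2 * a) 0"
  define K where "K = sqrt (2 * (1 + 2 * (2 * a)))"
  have "0 < M" "0 < K"
    using a by (simp_all add: M_def K_def ellI_pos)
  have "0 < min 1 (2 / a - 2 * a)"
    using two_mult_less_two_div[OF a] by simp
  have "filterlim (\<lambda>d::real. - ln d) at_top (at_right 0)"
    by (subst filterlim_uminus_at_top) (simp add: ln_at_0)
  then have "filterlim (\<lambda>d. 1 / (K * M) * - ln d) at_top (at_right 0)"
    using \<open>0 < K\<close> \<open>0 < M\<close> by (intro filterlim_tendsto_pos_mult_at_top[OF tendsto_const]) simp_all
  moreover have "\<forall>\<^sub>F d in at_right 0. 1 / (K * M) * - ln d \<le> period_ratio a (d + 2 * a)"
    using eventually_at_right_real[OF \<open>0 < min 1 (2 / a - 2 * a)\<close>]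
  proof eventually_elim
    case (elim d)
    then have d: "0 < d" "d < 1" "d + 2 * a \<le> 2 / a"
      by auto
    have "- ln d / K \<le> xi_quarter_period a (d + 2 * a)"
      using minus_ln_le_ellI[of "2 * a" d] a d by (simp add: K_def xi_quarter_period_def add.commute)
    moreover have "0 < eta_quarter_period a (d + 2 * a)" "eta_quarter_period a (d + 2 * a) \<le> M"
      using a d by (auto simp: M_def intro!: eta_quarter_period_pos eta_quarter_period_le)
    moreover have "0 \<le> - ln d / K"
      using d \<open>0 < K\<close> by (intro divide_nonneg_pos) auto
    ultimately have "- ln d / K / M \<le> period_ratio a (d + 2 * a)"
      unfolding period_ratio_def using \<open>0 < M\<close> by (meson frac_le order.trans)
    then show ?case
      by (simp add: field_simps)
  qed
  ultimately show ?thesis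
    unfolding filterlim_at_right_to_0[of _ _ "2 * a"] by (rule filterlim_at_top_mono)
qed

lemma power2_less_of_less_sqrt:
  fixes b x :: real
  assumes "0 \<le> b" "b < sqrt x"
  shows "b\<^sup>2 < x"
  using assms real_sqrt_less_iff[of "b\<^sup>2" x] by simp

lemma Txi_div_Teta_eq_period_ratio:
  assumes "0 < a" "0 < b" "b < sqrt (2 / a - 2 * a)"
  shows "Txi a b / Teta a b = period_ratio a (2 / a - b\<^sup>2)"
    and "2 / a - b\<^sup>2 \<in> {2 * a<..2 / a}"
proof -
  have "b\<^sup>2 < 2 / a - 2 * a"
    using assms by (intro power2_less_of_less_sqrt) auto
  then show "Txi a b / Teta a b = period_ratio a (2 / a - b\<^sup>2)" "2 / a - b\<^sup>2 \<in> {2 * a<..2 / a}"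
    using assms Txi_eq_xi_quarter_period Teta_eq_eta_quarter_period
    by (auto simp: period_ratio_def)
qed

lemma tendsto_period_ratio_at_right_0:
  assumes "0 < a" "a < 1"
  shows "((\<lambda>b. period_ratio a (2 / a - b\<^sup>2)) \<longlongrightarrow> sqrt (1 + a\<^sup>2) * ellK (a\<^sup>2) / ellK 0) (at_right 0)"
proof -
  have "isCont (period_ratio a) (2 / a)"
    using assms two_mult_less_two_div[OF assms] by (intro isCont_period_ratio)
  then have "((\<lambda>b. period_ratio a (2 / a - b\<^sup>2)) \<longlongrightarrow> period_ratio a (2 / a)) (at_right 0)"
    by (rule isCont_tendsto_compose) (auto intro!: tendsto_eq_intros)
  then show ?thesis
    unfolding period_ratio_2_over_a[OF \<open>0 < a\<close>] .
qed

lemma filterlim_period_ratio_at_left: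
  assumes "0 < a" "a < 1"
  shows "filterlim (\<lambda>b. period_ratio a (2 / a - b\<^sup>2)) at_top (at_left (sqrt (2 / a - 2 * a)))"
proof -
  have gap: "0 < 2 / a - 2 * a"
    using two_mult_less_two_div[OF assms] by simp
  then have "0 < sqrt (2 / a - 2 * a)"
    by simp
  have "((\<lambda>b. 2 / a - b\<^sup>2) \<longlongrightarrow> 2 / a - (sqrt (2 / a - 2 * a))\<^sup>2) (at_left (sqrt (2 / a - 2 * a)))"
    by (intro tendsto_intros)
  then have "((\<lambda>b. 2 / a - b\<^sup>2) \<longlongrightarrow> 2 * a) (at_left (sqrt (2 / a - 2 * a)))"
    using gap by simp
  moreover have "\<forall>\<^sub>F b in at_left (sqrt (2 / a - 2 * a)). 2 / a - b\<^sup>2 \<in> {2 * a<..}"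
    using eventually_at_left_real[OF \<open>0 < sqrt (2 / a - 2 * a)\<close>]
    by eventually_elim (auto dest!: power2_less_of_less_sqrt[rotated])
  ultimately have "filterlim (\<lambda>b. 2 / a - b\<^sup>2) (at_right (2 * a)) (at_left (sqrt (2 / a - 2 * a)))"
    unfolding filterlim_at by (auto elim: eventually_mono)
  with filterlim_period_ratio_at_top[OF assms] show ?thesis
    by (rule filterlim_compose)
qed

theorem proposition3p2:
  fixes a :: real
  assumes "0 < a" and "a < 1"
  shows "strict_mono_on {0<..<sqrt (2 / a - 2 * a)} (\<lambda>b. Txi a b / Teta a b)
       \<and> ((\<lambda>b. Txi a b / Teta a b) \<longlongrightarrow> sqrt (1 + a\<^sup>2) * ellK (a\<^sup>2) / ellK 0) (at_right 0)
       \<and> filterlim (\<lambda>b. Txi a b / Teta a b) at_top (at_left (sqrt (2 / a - 2 * a)))"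
proof (intro conjI)
  note ratio = Txi_div_Teta_eq_period_ratio[OF \<open>0 < a\<close>]
  have "0 < sqrt (2 / a - 2 * a)"
    using two_mult_less_two_div[OF assms] by simp
  have near: "\<forall>\<^sub>F b in at_right 0. Txi a b / Teta a b = period_ratio a (2 / a - b\<^sup>2)"
    "\<forall>\<^sub>F b in at_left (sqrt (2 / a - 2 * a)). Txi a b / Teta a b = period_ratio a (2 / a - b\<^sup>2)"
    using eventually_at_right_real[OF \<open>0 < sqrt (2 / a - 2 * a)\<close>]
      eventually_at_left_real[OF \<open>0 < sqrt (2 / a - 2 * a)\<close>]
    by (auto elim!: eventually_mono intro: ratio)
  show "strict_mono_on {0<..<sqrt (2 / a - 2 * a)} (\<lambda>b. Txi a b / Teta a b)"
  proof (rule monotone_onI)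
    fix b b' assume "b \<in> {0<..<sqrt (2 / a - 2 * a)}" "b' \<in> {0<..<sqrt (2 / a - 2 * a)}" "b < b'"
    then show "Txi a b / Teta a b < Txi a b' / Teta a b'"
      using ratio[of b] ratio[of b'] period_ratio_strict_antimono[OF \<open>0 < a\<close>]
      by (auto simp: monotone_on_def power_strict_mono)
  qed
  show "((\<lambda>b. Txi a b / Teta a b) \<longlongrightarrow> sqrt (1 + a\<^sup>2) * ellK (a\<^sup>2) / ellK 0) (at_right 0)"
    using tendsto_period_ratio_at_right_0[OF assms] by (rule tendsto_cong[OF near(1), THEN iffD2])
  show "filterlim (\<lambda>b. Txi a b / Teta a b) at_top (at_left (sqrt (2 / a - 2 * a)))"
    using filterlim_period_ratio_at_left[OF assms] by (rule filterlim_cong[OF refl refl near(2), THEN iffD2])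
qed

end
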